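(* Let $p$ be a prime, $n\ge1$, $s\ge0$ integers, and $f:\mathbb{F}_{p^n}\to\mathbb{F}_p$. Let $M=(m_{x,y})_{x,y\in\mathbb{F}_{p^n}}$ be the $p^n\times p^n$ matrix with $m_{x,y}=\zeta_p^{f(x+y)}$. Then $f$ is $s$-plateaued if and only if $MM^*M=p^{n+s}M$, where $M^*$ is the conjugate transpose of $M$.
   Context: $\zeta_p=e^{2\pi i/p}$, $Tr_n(z)=\sum_{i=0}^{n-1}z^{p^i}$. The Walsh transform is $\widehat f(\mu)=\sum_{x\in\mathbb{F}_{p^n}}\zeta_p^{f(x)-Tr_n(\mu x)}$. $f$ is $s$-plateaued if $|\widehat f(\mu)|\in\{0,p^{(n+s)/2}\}$ for all $\mu\in\mathbb{F}_{p^n}$. *)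

theory Defs
  imports "HOL-Analysis.Analysis"
begin

text \<open>The finite field F_{p^n} is modelled by a finite field type 'a with CARD('a) = p^n.
  F_p is its prime subfield, i.e. the image of of_nat.\<close>

definition prime_subfield :: "'a::field set" where
  "prime_subfield = range of_nat"

text \<open>zeta_p^y for y in the prime subfield: y is identified with the least natural k
  with of_nat k = y (so 0 <= k < p).\<close>
definition zeta_pow :: "nat \<Rightarrow> 'a::field \<Rightarrow> complex" where
  "zeta_pow p y = cis (2 * pi * real (LEAST k::nat. of_nat k = y) / real p)"

definition trace_n :: "nat \<Rightarrow> nat \<Rightarrow> 'a::field \<Rightarrow> 'a" where
  "trace_n p n z = (\<Sum>i<n. z ^ (p ^ i))"

definition walsh :: "nat \<Rightarrow> nat \<Rightarrow> ('a::{field,finite} \<Rightarrow> 'a) \<Rightarrow> 'a \<Rightarrow> complex" where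
  "walsh p n f \<mu> = (\<Sum>x\<in>UNIV. zeta_pow p (f x - trace_n p n (\<mu> * x)))"

definition plateaued :: "nat \<Rightarrow> nat \<Rightarrow> nat \<Rightarrow> ('a::{field,finite} \<Rightarrow> 'a) \<Rightarrow> bool" where
  "plateaued p n s f \<longleftrightarrow>
     (\<forall>\<mu>. cmod (walsh p n f \<mu>) \<in> {0, real p powr (real (n + s) / 2)})"

definition conj_transpose :: "((complex, 'n::finite) vec, 'm::finite) vec \<Rightarrow> ((complex, 'm) vec, 'n) vec" where
  "conj_transpose A = (\<chi> i j. cnj (A $ j $ i))"

definition plat_matrix :: "nat \<Rightarrow> ('a::{field,finite} \<Rightarrow> 'a) \<Rightarrow> ((complex, 'a) vec, 'a) vec" where
  "plat_matrix p f = (\<chi> x y. zeta_pow p (f (x + y)))"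

end

theory Submission
  imports
    Defs
    "HOL-Number_Theory.Cong"
    "HOL-Computational_Algebra.Polynomial"
    "HOL-Decision_Procs.Algebra_Aux"
    "HOL-Library.Real_Mod"
begin

(* Let \<chi>(a) = \<zeta>_p^(Tr(a)) be the canonical additive character of F_(p^n). Transforming the
   rows of a matrix by A \<mapsto> (\<Sum>_z A(x,z) \<chi>(-\<mu> z))_(x,\<mu>) is injective by orthogonality of
   characters and commutes with multiplication from the left. The transform of M is
   \<chi>(\<mu> x) W(\<mu>), where W is the Walsh transform of f, and since M is symmetric the transform
   of M M^* M is \<chi>(\<mu> x) |W(\<mu>)|^2 W(\<mu>). Hence M M^* M = c M iff |W(\<mu>)|^2 W(\<mu>) = c W(\<mu>)
   for every \<mu>, i.e. iff every |W(\<mu>)| lies in {0, sqrt c}. *)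

lemma units_class_field: "Units (cring_class_ops :: 'a::field ring) = UNIV - {0}"
proof (intro equalityI subsetI)
  fix y :: 'a
  assume "y \<in> Units cring_class_ops"
  then show "y \<in> UNIV - {0}"
    by (auto simp: Units_def class_simps)
next
  fix y :: 'a
  assume "y \<in> UNIV - {0}"
  then have "inverse y * y = 1 \<and> y * inverse y = 1"
    by simp
  then show "y \<in> Units cring_class_ops"
    unfolding Units_def cring_class_ops_def by auto
qed

lemma field_power_card_eq_self:
  fixes x :: "'a::{field,finite}"
  shows "x ^ CARD('a) = x"
proof (cases "x = 0")
  case False
  have "x \<in> Units cring_class_ops" "finite (Units (cring_class_ops :: 'a ring))"
    using False by (simp_all only: units_class_field) simp_all
  then have "x ^ card (Units (cring_class_ops :: 'a ring)) = 1"
    by (rule cring_class.units_power_order_eq_one[rotated])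
  moreover have "CARD('a) = Suc (card (Units (cring_class_ops :: 'a ring)))"
    unfolding units_class_field by (simp add: card_Diff_singleton)
  ultimately show ?thesis by simp
qed simp

lemma of_nat_card_eq_0: "(of_nat CARD('a) :: 'a::{ring_1,finite}) = 0"
proof -
  have "(\<Sum>x\<in>UNIV. x + 1) = (\<Sum>x\<in>UNIV. x :: 'a)"
    by (rule sum.reindex_bij_witness[of _ "\<lambda>x. x - 1" "\<lambda>x. x + 1"]) auto
  then show ?thesis by (simp add: sum.distrib)
qed

lemma CHAR_eq_of_card_eq_prime_power:
  fixes p :: nat
  assumes "prime p" and "CARD('a::{field,finite}) = p ^ n"
  shows "CHAR('a) = p"
proof -
  have "prime CHAR('a)"
    by (intro prime_CHAR_semidom finite_imp_CHAR_pos) simp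
  moreover have "CHAR('a) dvd p ^ n"
    using of_nat_card_eq_0[where ?'a = 'a] assms(2) by (simp only: of_nat_eq_0_iff_char_dvd)
  ultimately have "CHAR('a) dvd p"
    by (rule prime_dvd_power)
  with \<open>prime CHAR('a)\<close> assms(1) show ?thesis
    by (rule primes_dvd_imp_eq)
qed

lemma finite_field_poly_eq_0:
  fixes q :: "'a::{field,finite} poly"
  assumes "\<forall>x. poly q x = 0" and "degree q < CARD('a)"
  shows "q = 0"
proof (rule ccontr)
  assume "q \<noteq> 0"
  then have "card {x. poly q x = 0} \<le> degree q"
    by (rule card_poly_roots_bound)
  with assms show False by simp
qed

lemma cis_2pi_div_eq_iff:
  fixes p j k :: nat
  assumes "p > 0"
  shows "cis (2 * pi * j / p) = cis (2 * pi * k / p) \<longleftrightarrow> [j = k] (mod p)"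
proof -
  have "cis (2 * pi * j / p) = cis (2 * pi * k / p) \<longleftrightarrow>
      (\<exists>m::int. 2 * pi * k / p = 2 * pi * j / p + m * (2 * pi))"
    by (simp add: cis_eq_iff rcong_altdef)
  also have "\<dots> \<longleftrightarrow> (\<exists>m::int. real k = real j + real p * m)"
  proof (intro ex_cong1)
    fix m :: int
    have "2 * pi * j / p + m * (2 * pi) = (2 * pi / p) * (j + p * m)"
      using assms by (simp add: field_simps)
    moreover have "2 * pi * k / p = (2 * pi / p) * k"
      by simp
    ultimately show "2 * pi * k / p = 2 * pi * j / p + m * (2 * pi) \<longleftrightarrow> real k = real j + real p * m"
      using assms by simp
  qed
  also have "\<dots> \<longleftrightarrow> (\<exists>m::int. int k = int j + int p * m)"
  proof (intro ex_cong1)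
    fix m :: int
    have "real k = real j + real p * m \<longleftrightarrow> real_of_int (int k) = real_of_int (int j + int p * m)"
      by simp
    also have "\<dots> \<longleftrightarrow> int k = int j + int p * m"
      by (rule of_int_eq_iff)
    finally show "real k = real j + real p * m \<longleftrightarrow> int k = int j + int p * m" .
  qed
  also have "\<dots> \<longleftrightarrow> [j = k] (mod p)"
    using cong_iff_lin[of "int j" "int k" "int p"] cong_int_iff[of j k p] by simp
  finally show ?thesis .
qed

lemma cmod_in_zero_or_iff:
  fixes w :: complex and r :: real
  assumes "r \<ge> 0"
  shows "cmod w \<in> {0, r} \<longleftrightarrow> w * cnj w * w = of_real (r ^ 2) * w"
proof -
  have "w * cnj w * w = of_real (cmod w ^ 2) * w"
    by (simp only: complex_norm_square)
  then have "w * cnj w * w = of_real (r ^ 2) * w \<longleftrightarrow> w = 0 \<or> cmod w ^ 2 = r ^ 2"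
    by (metis mult_cancel_right of_real_eq_iff)
  also have "\<dots> \<longleftrightarrow> cmod w = 0 \<or> cmod w = r"
    using assms by (simp add: power2_eq_iff_nonneg)
  finally show ?thesis by auto
qed

locale prime_char_field =
  fixes p :: nat and field_type :: "'a::field itself"
  assumes prime_p: "prime p" and CHAR_eq: "CHAR('a) = p"
begin

lemma p_gt_1: "p > 1"
  using prime_p prime_gt_1_nat by blast

lemma of_nat_eq_iff_cong: "(of_nat x :: 'a) = of_nat y \<longleftrightarrow> [x = y] (mod p)"
  using of_nat_eq_iff_cong_CHAR[where ?'a = 'a] by (simp add: CHAR_eq)

lemma of_nat_power_char: "(of_nat k :: 'a) ^ p = of_nat k"
proof (induction k)
  case 0
  then show ?case using p_gt_1 by (simp add: power_0_left)
next
  case (Suc k)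
  have "(of_nat k + 1 :: 'a) ^ p = of_nat k ^ p + 1 ^ p"
    by (rule freshmans_dream) (simp_all add: CHAR_eq prime_p)
  with Suc show ?case by (simp add: add.commute)
qed

lemma prime_subfield_eq: "(prime_subfield :: 'a set) = of_nat ` {..<p}"
proof -
  have "(of_nat k :: 'a) \<in> of_nat ` {..<p}" for k
    using p_gt_1 by (intro image_eqI[of _ _ "k mod p"]) (simp_all add: of_nat_eq_iff_cong cong_def)
  then show ?thesis
    unfolding prime_subfield_def by auto
qed

lemma card_prime_subfield: "card (prime_subfield :: 'a set) = p"
proof -
  have "inj_on (of_nat :: nat \<Rightarrow> 'a) {..<p}"
    by (auto simp: inj_on_def of_nat_eq_iff_cong cong_def)
  then show ?thesis by (simp add: prime_subfield_eq card_image)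
qed

lemma add_in_prime_subfield:
  assumes "(a :: 'a) \<in> prime_subfield" and "b \<in> prime_subfield"
  shows "a + b \<in> prime_subfield"
proof -
  obtain i j where "a = of_nat i" and "b = of_nat j"
    using assms by (auto simp: prime_subfield_def)
  then have "a + b = of_nat (i + j)"
    by simp
  then show ?thesis
    unfolding prime_subfield_def by (rule range_eqI)
qed

lemma uminus_in_prime_subfield:
  assumes "(a :: 'a) \<in> prime_subfield"
  shows "- a \<in> prime_subfield"
proof -
  obtain k where a: "a = of_nat k"
    using assms by (auto simp: prime_subfield_def)
  have "(of_nat (p * k - k) :: 'a) = of_nat (p * k) - of_nat k"
    using p_gt_1 by (simp add: of_nat_diff)
  also have "\<dots> = - a"
    using of_nat_CHAR[where ?'a = 'a] by (simp add: a CHAR_eq)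
  finally have "- a = of_nat (p * k - k)" ..
  then show ?thesis
    unfolding prime_subfield_def by (rule range_eqI)
qed

text \<open>The elements fixed by the Frobenius map are exactly the roots of X^p - X, of which
  there are at most p; the p elements of the prime subfield are among them.\<close>

lemma power_char_eq_self_iff: "(y :: 'a) ^ p = y \<longleftrightarrow> y \<in> prime_subfield"
proof
  define q :: "'a poly" where "q = Polynomial.monom 1 p - [:0, 1:]"
  have poly_q: "poly q x = x ^ p - x" for x
    by (simp add: q_def poly_monom)
  have "coeff q p = 1"
    using p_gt_1 by (simp add: q_def coeff_monom coeff_pCons split: nat.split)
  then have "q \<noteq> 0" by auto
  moreover have "degree q \<le> p"
    unfolding q_def using p_gt_1
    by (intro degree_diff_le) (simp_all add: degree_monom_le)
  ultimately have card_roots: "card {x. poly q x = 0} \<le> p"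
    using card_poly_roots_bound[of q] by linarith
  have subset: "prime_subfield \<subseteq> {x. poly q x = 0}"
    by (auto simp: prime_subfield_def poly_q of_nat_power_char)
  have finite_roots: "finite {x. poly q x = 0}"
    using \<open>q \<noteq> 0\<close> by (rule poly_roots_finite)
  have "prime_subfield = {x. poly q x = 0}"
    using card_subset_eq[OF finite_roots subset] card_mono[OF finite_roots subset]
      card_roots card_prime_subfield by linarith
  then have "prime_subfield = {x :: 'a. x ^ p = x}"
    by (simp add: poly_q)
  then show "y ^ p = y \<Longrightarrow> y \<in> prime_subfield"
    by blast
qed (auto simp: prime_subfield_def of_nat_power_char)

lemma zeta_pow_of_nat: "zeta_pow p (of_nat k :: 'a) = cis (2 * pi * k / p)"
proof -
  define j where "j = (LEAST j. (of_nat j :: 'a) = of_nat k)"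
  have "(of_nat j :: 'a) = of_nat k"
    unfolding j_def by (rule LeastI) (rule refl)
  then have "[j = k] (mod p)"
    by (simp add: of_nat_eq_iff_cong)
  then have "cis (2 * pi * j / p) = cis (2 * pi * k / p)"
    using p_gt_1 by (simp add: cis_2pi_div_eq_iff)
  then show ?thesis
    unfolding zeta_pow_def j_def .
qed

lemma zeta_pow_zero: "zeta_pow p (0 :: 'a) = 1"
  using zeta_pow_of_nat[of 0] by simp

lemma cnj_zeta_pow_mult_self: "cnj (zeta_pow p (a :: 'a)) * zeta_pow p a = 1"
  by (simp add: zeta_pow_def cis_cnj cis_mult)

lemma zeta_pow_add:
  assumes "a \<in> prime_subfield" and "b \<in> prime_subfield"
  shows "zeta_pow p (a + b :: 'a) = zeta_pow p a * zeta_pow p b"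
proof -
  obtain i j where a: "a = of_nat i" and b: "b = of_nat j"
    using assms by (auto simp: prime_subfield_def)
  have "zeta_pow p (a + b) = cis (2 * pi * (i + j) / p)"
    using zeta_pow_of_nat[of "i + j"] by (simp add: a b)
  also have "\<dots> = cis (2 * pi * i / p) * cis (2 * pi * j / p)"
    by (simp add: cis_mult add_divide_distrib distrib_left)
  finally show ?thesis
    by (simp add: a b zeta_pow_of_nat)
qed

lemma zeta_pow_uminus:
  assumes "(a :: 'a) \<in> prime_subfield"
  shows "zeta_pow p (- a) = cnj (zeta_pow p a)"
proof -
  have "zeta_pow p (- a) * zeta_pow p a = cnj (zeta_pow p a) * zeta_pow p a"
    using zeta_pow_add[OF uminus_in_prime_subfield[OF assms] assms]
    by (simp add: zeta_pow_zero cnj_zeta_pow_mult_self)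
  moreover have "zeta_pow p a \<noteq> 0"
    by (simp add: zeta_pow_def)
  ultimately show ?thesis
    by simp
qed

lemma zeta_pow_eq_1_iff:
  assumes "(a :: 'a) \<in> prime_subfield"
  shows "zeta_pow p a = 1 \<longleftrightarrow> a = 0"
proof -
  obtain k where a: "a = of_nat k"
    using assms by (auto simp: prime_subfield_def)
  have "zeta_pow p a = 1 \<longleftrightarrow> cis (2 * pi * k / p) = cis (2 * pi * 0 / p)"
    by (simp add: a zeta_pow_of_nat)
  also have "\<dots> \<longleftrightarrow> [k = 0] (mod p)"
    using cis_2pi_div_eq_iff[of p k 0] p_gt_1 by simp
  also have "\<dots> \<longleftrightarrow> a = 0"
    using of_nat_eq_iff_cong[of k 0] by (simp add: a)
  finally show ?thesis .
qed

lemma trace_n_add: "trace_n p n (a + b :: 'a) = trace_n p n a + trace_n p n b"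
  unfolding trace_n_def
  by (simp add: sum.distrib freshmans_dream'[where n = i for i] CHAR_eq prime_p)

lemma trace_n_zero: "trace_n p n (0 :: 'a) = 0"
  unfolding trace_n_def using p_gt_1 by (simp add: power_0_left)

lemma trace_n_uminus: "trace_n p n (- a :: 'a) = - trace_n p n a"
  using trace_n_add[of n a "- a"] by (simp add: trace_n_zero eq_neg_iff_add_eq_0 add.commute)

end

locale finite_field_of_order = prime_char_field p field_type
  for p and field_type :: "'a::{field,finite} itself" +
  fixes n :: nat
  assumes card_eq: "CARD('a) = p ^ n"
begin

lemma n_pos: "n > 0"
proof (rule ccontr)
  assume "\<not> n > 0"
  then have "CHAR('a) dvd 1"
    using of_nat_card_eq_0[where ?'a = 'a] card_eq by (simp add: of_nat_eq_0_iff_char_dvd)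
  with CHAR_eq p_gt_1 show False by simp
qed

lemma trace_n_power_char: "trace_n p n (a :: 'a) ^ p = trace_n p n a"
proof -
  have "trace_n p n a ^ p = (\<Sum>i<n. (a ^ p ^ i) ^ p)"
    unfolding trace_n_def by (rule freshmans_dream_sum) (simp_all add: CHAR_eq prime_p)
  also have "\<dots> = (\<Sum>i<n. a ^ p ^ Suc i)"
    by (simp add: power_mult[symmetric] mult.commute)
  finally have frobenius: "trace_n p n a ^ p = (\<Sum>i<n. a ^ p ^ Suc i)" .
  have "a + (\<Sum>i<n. a ^ p ^ Suc i) = (\<Sum>i<Suc n. a ^ p ^ i)"
    by (subst sum.lessThan_Suc_shift) simp
  also have "\<dots> = a + trace_n p n a"
    using field_power_card_eq_self[of a] by (simp add: trace_n_def card_eq)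
  finally show ?thesis
    using frobenius by simp
qed

lemma trace_n_in_prime_subfield: "trace_n p n (a :: 'a) \<in> prime_subfield"
  using trace_n_power_char power_char_eq_self_iff by blast

text \<open>The trace is a polynomial function of degree p^(n-1) < CARD('a), so it cannot vanish
  everywhere.\<close>

lemma trace_n_not_identically_zero: "\<exists>a :: 'a. trace_n p n a \<noteq> 0"
proof (rule ccontr)
  define q :: "'a poly" where "q = (\<Sum>i<n. Polynomial.monom 1 (p ^ i))"
  have poly_q: "poly q x = trace_n p n x" for x
    by (simp add: q_def trace_n_def poly_sum poly_monom)
  have "coeff q (p ^ (n - 1)) = (\<Sum>i<n. if p ^ i = p ^ (n - 1) then 1 else 0)"
    by (simp add: q_def coeff_sum coeff_monom)
  also have "\<dots> = 1"
    using n_pos p_gt_1 by simp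
  finally have "q \<noteq> 0" by auto
  have "degree q \<le> p ^ (n - 1)"
    unfolding q_def using p_gt_1
    by (intro degree_sum_le) (auto simp: degree_monom_eq intro: power_increasing)
  also have "\<dots> < CARD('a)"
    using p_gt_1 n_pos by (simp add: card_eq)
  finally have degree_q: "degree q < CARD('a)" .
  assume "\<not> (\<exists>a :: 'a. trace_n p n a \<noteq> 0)"
  then have "\<forall>x. poly q x = 0"
    by (simp add: poly_q)
  then have "q = 0"
    using degree_q by (rule finite_field_poly_eq_0)
  with \<open>q \<noteq> 0\<close> show False ..
qed

definition canonical_char :: "'a \<Rightarrow> complex" where
  "canonical_char a = zeta_pow p (trace_n p n a)"

lemma canonical_char_add: "canonical_char (a + b) = canonical_char a * canonical_char b"
  unfolding canonical_char_def trace_n_add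
  by (rule zeta_pow_add[OF trace_n_in_prime_subfield trace_n_in_prime_subfield])

lemma canonical_char_uminus: "canonical_char (- a) = cnj (canonical_char a)"
  unfolding canonical_char_def trace_n_uminus by (rule zeta_pow_uminus[OF trace_n_in_prime_subfield])

lemma canonical_char_zero: "canonical_char 0 = 1"
  unfolding canonical_char_def trace_n_zero by (rule zeta_pow_zero)

lemma sum_canonical_char: "(\<Sum>u\<in>UNIV. canonical_char u) = 0"
proof -
  obtain b :: 'a where b: "trace_n p n b \<noteq> 0"
    using trace_n_not_identically_zero by blast
  have "(\<Sum>u\<in>UNIV. canonical_char u) = (\<Sum>u\<in>UNIV. canonical_char (u + b))"
    by (rule sum.reindex_bij_witness[of _ "\<lambda>u. u + b" "\<lambda>u. u - b"]) auto
  also have "\<dots> = canonical_char b * (\<Sum>u\<in>UNIV. canonical_char u)"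
    by (simp add: canonical_char_add sum_distrib_left mult.commute)
  finally have "(1 - canonical_char b) * (\<Sum>u\<in>UNIV. canonical_char u) = 0"
    by (simp add: algebra_simps)
  moreover have "canonical_char b \<noteq> 1"
    using b zeta_pow_eq_1_iff[OF trace_n_in_prime_subfield] by (simp add: canonical_char_def)
  ultimately show ?thesis by simp
qed

lemma sum_canonical_char_mult:
  "(\<Sum>u\<in>UNIV. canonical_char (a * u)) = (if a = 0 then of_nat CARD('a) else 0)"
proof (cases "a = 0")
  case False
  have "(\<Sum>u\<in>UNIV. canonical_char (a * u)) = (\<Sum>u\<in>UNIV. canonical_char u)"
    by (rule sum.reindex_bij_witness[of _ "\<lambda>u. u / a" "\<lambda>u. a * u"]) (use False in auto)
  with False show ?thesis by (simp add: sum_canonical_char)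
qed (simp add: canonical_char_zero)

definition row_fourier :: "((complex, 'a) vec, 'b::finite) vec \<Rightarrow> 'b \<Rightarrow> 'a \<Rightarrow> complex" where
  "row_fourier A x \<mu> = (\<Sum>z\<in>UNIV. A $ x $ z * canonical_char (- (\<mu> * z)))"

lemma row_fourier_inversion:
  "(\<Sum>\<mu>\<in>UNIV. row_fourier A x \<mu> * canonical_char (\<mu> * y)) = of_nat CARD('a) * A $ x $ y"
proof -
  have "(\<Sum>\<mu>\<in>UNIV. row_fourier A x \<mu> * canonical_char (\<mu> * y))
      = (\<Sum>\<mu>\<in>UNIV. \<Sum>z\<in>UNIV. A $ x $ z * canonical_char ((y - z) * \<mu>))"
    unfolding row_fourier_def sum_distrib_right
    by (intro sum.cong refl) (simp add: mult.assoc algebra_simps flip: canonical_char_add)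
  also have "\<dots> = (\<Sum>z\<in>UNIV. A $ x $ z * (\<Sum>\<mu>\<in>UNIV. canonical_char ((y - z) * \<mu>)))"
    by (subst sum.swap) (simp add: sum_distrib_left)
  also have "\<dots> = of_nat CARD('a) * A $ x $ y"
    by (simp add: sum_canonical_char_mult if_distrib cong: if_cong)
  finally show ?thesis .
qed

lemma row_fourier_inject:
  assumes "row_fourier A = row_fourier B"
  shows "A = B"
proof -
  have "of_nat CARD('a) * A $ x $ y = of_nat CARD('a) * B $ x $ y" for x y
    by (simp only: assms flip: row_fourier_inversion)
  then show ?thesis by (simp add: vec_eq_iff)
qed

lemma row_fourier_mult: "row_fourier (A ** B) x \<mu> = (\<Sum>k\<in>UNIV. A $ x $ k * row_fourier B k \<mu>)"
  unfolding row_fourier_def matrix_matrix_mult_def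
  by (simp add: sum_distrib_right sum_distrib_left mult.assoc) (rule sum.swap)

lemma row_fourier_scaleR: "row_fourier (c *\<^sub>R A) x \<mu> = of_real c * row_fourier A x \<mu>"
  unfolding row_fourier_def vector_scaleR_component
  by (simp add: sum_distrib_left scaleR_conv_of_real mult.assoc)

lemma walsh_eq_sum_canonical_char:
  fixes f :: "'a \<Rightarrow> 'a"
  assumes "\<forall>x. f x \<in> prime_subfield"
  shows "walsh p n f \<mu> = (\<Sum>x\<in>UNIV. zeta_pow p (f x) * canonical_char (- (\<mu> * x)))"
  unfolding walsh_def canonical_char_def
proof (intro sum.cong refl)
  fix x
  have "zeta_pow p (f x - trace_n p n (\<mu> * x)) = zeta_pow p (f x + trace_n p n (- (\<mu> * x)))"
    by (simp add: trace_n_uminus)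
  also have "\<dots> = zeta_pow p (f x) * zeta_pow p (trace_n p n (- (\<mu> * x)))"
    using assms by (intro zeta_pow_add trace_n_in_prime_subfield) simp
  finally show "zeta_pow p (f x - trace_n p n (\<mu> * x))
      = zeta_pow p (f x) * zeta_pow p (trace_n p n (- (\<mu> * x)))" .
qed

lemma row_fourier_plat_matrix:
  fixes f :: "'a \<Rightarrow> 'a"
  assumes "\<forall>x. f x \<in> prime_subfield"
  shows "row_fourier (plat_matrix p f) k \<mu> = canonical_char (\<mu> * k) * walsh p n f \<mu>"
proof -
  have "row_fourier (plat_matrix p f) k \<mu>
      = (\<Sum>z\<in>UNIV. zeta_pow p (f (k + z)) * canonical_char (- (\<mu> * z)))"
    by (simp add: row_fourier_def plat_matrix_def)
  also have "\<dots> = (\<Sum>w\<in>UNIV. zeta_pow p (f w) * canonical_char (- (\<mu> * (w - k))))"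
    by (rule sum.reindex_bij_witness[of _ "\<lambda>w. w - k" "\<lambda>z. k + z"]) auto
  also have "\<dots> = (\<Sum>w\<in>UNIV. canonical_char (\<mu> * k) * (zeta_pow p (f w) * canonical_char (- (\<mu> * w))))"
  proof (intro sum.cong refl)
    fix w
    have "- (\<mu> * (w - k)) = \<mu> * k + - (\<mu> * w)"
      by (simp add: algebra_simps)
    then have shift: "canonical_char (- (\<mu> * (w - k)))
        = canonical_char (\<mu> * k) * canonical_char (- (\<mu> * w))"
      by (simp only: canonical_char_add)
    show "zeta_pow p (f w) * canonical_char (- (\<mu> * (w - k)))
        = canonical_char (\<mu> * k) * (zeta_pow p (f w) * canonical_char (- (\<mu> * w)))"
      unfolding shift by (rule mult.left_commute)
  qed
  also have "\<dots> = canonical_char (\<mu> * k) * walsh p n f \<mu>"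
    by (simp add: walsh_eq_sum_canonical_char[OF assms] sum_distrib_left)
  finally show ?thesis .
qed

text \<open>Holds because plat_matrix p f is symmetric.\<close>

lemma row_fourier_conj_transpose_plat_matrix:
  fixes f :: "'a \<Rightarrow> 'a"
  shows "row_fourier (conj_transpose (plat_matrix p f)) k \<mu> = cnj (row_fourier (plat_matrix p f) k (- \<mu>))"
  unfolding row_fourier_def conj_transpose_def plat_matrix_def
  by (simp add: canonical_char_uminus[symmetric] add.commute)

lemma row_fourier_plat_matrix_cube:
  fixes f :: "'a \<Rightarrow> 'a"
  assumes f_prime: "\<forall>x. f x \<in> prime_subfield"
  defines "M \<equiv> plat_matrix p f" and "W \<equiv> walsh p n f"
  shows "row_fourier (M ** conj_transpose M ** M) x \<mu>
    = W \<mu> * cnj (W \<mu>) * W \<mu> * canonical_char (\<mu> * x)"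
proof -
  have row_M: "row_fourier M k \<nu> = canonical_char (\<nu> * k) * W \<nu>" for k \<nu>
    unfolding M_def W_def using f_prime by (rule row_fourier_plat_matrix)
  have row_Mt: "row_fourier (conj_transpose M) k \<nu> = cnj (row_fourier M k (- \<nu>))" for k \<nu>
    unfolding M_def by (rule row_fourier_conj_transpose_plat_matrix)
  have "row_fourier (M ** conj_transpose M) x (- \<mu>)
      = (\<Sum>k\<in>UNIV. M $ x $ k * (canonical_char (- (\<mu> * k)) * cnj (W \<mu>)))"
    by (simp add: row_fourier_mult row_Mt row_M canonical_char_uminus)
  also have "\<dots> = cnj (W \<mu>) * row_fourier M x \<mu>"
    by (simp add: row_fourier_def sum_distrib_left mult_ac)
  finally have row_MMt: "row_fourier (M ** conj_transpose M) x (- \<mu>) = cnj (W \<mu>) * row_fourier M x \<mu>" .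
  have "row_fourier (M ** conj_transpose M ** M) x \<mu>
      = (\<Sum>k\<in>UNIV. (M ** conj_transpose M) $ x $ k * (canonical_char (\<mu> * k) * W \<mu>))"
    by (simp add: row_fourier_mult row_M)
  also have "\<dots> = W \<mu> * row_fourier (M ** conj_transpose M) x (- \<mu>)"
    by (simp add: row_fourier_def sum_distrib_left mult_ac)
  finally show ?thesis
    by (simp add: row_MMt row_M mult_ac)
qed

lemma plat_matrix_cube_eq_iff:
  fixes f :: "'a \<Rightarrow> 'a"
  assumes f_prime: "\<forall>x. f x \<in> prime_subfield"
  defines "M \<equiv> plat_matrix p f" and "W \<equiv> walsh p n f"
  shows "M ** conj_transpose M ** M = c *\<^sub>R M \<longleftrightarrow> (\<forall>\<mu>. W \<mu> * cnj (W \<mu>) * W \<mu> = of_real c * W \<mu>)"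
proof -
  have row_M: "row_fourier M k \<nu> = canonical_char (\<nu> * k) * W \<nu>" for k \<nu>
    unfolding M_def W_def using f_prime by (rule row_fourier_plat_matrix)
  have row_cube: "row_fourier (M ** conj_transpose M ** M) x \<mu>
      = W \<mu> * cnj (W \<mu>) * W \<mu> * canonical_char (\<mu> * x)" for x \<mu>
    unfolding M_def W_def using f_prime by (rule row_fourier_plat_matrix_cube)
  show ?thesis
  proof
    assume "M ** conj_transpose M ** M = c *\<^sub>R M"
    then have "row_fourier (M ** conj_transpose M ** M) 0 \<mu> = row_fourier (c *\<^sub>R M) 0 \<mu>" for \<mu>
      by simp
    then show "\<forall>\<mu>. W \<mu> * cnj (W \<mu>) * W \<mu> = of_real c * W \<mu>"
      by (simp add: row_cube row_fourier_scaleR row_M canonical_char_zero)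
  next
    assume cube: "\<forall>\<mu>. W \<mu> * cnj (W \<mu>) * W \<mu> = of_real c * W \<mu>"
    have "row_fourier (M ** conj_transpose M ** M) x \<mu> = row_fourier (c *\<^sub>R M) x \<mu>" for x \<mu>
      unfolding row_cube row_fourier_scaleR row_M cube[rule_format] by (simp only: mult_ac)
    then show "M ** conj_transpose M ** M = c *\<^sub>R M"
      by (intro row_fourier_inject ext)
  qed
qed

end

theorem mainTheorem7:
  fixes p n s :: nat and f :: "'a::{field,finite} \<Rightarrow> 'a"
  assumes "prime p" and "n \<ge> 1" and "CARD('a) = p ^ n"
    and "\<forall>x. f x \<in> prime_subfield"
  shows "plateaued p n s f \<longleftrightarrow>
    plat_matrix p f ** conj_transpose (plat_matrix p f) ** plat_matrix p f
      = (of_nat p ^ (n + s)) *\<^sub>R plat_matrix p f"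
proof -
  interpret finite_field_of_order p "TYPE('a)" n
    using assms CHAR_eq_of_card_eq_prime_power by unfold_locales auto
  define r where "r = real p powr (real (n + s) / 2)"
  have "r ^ 2 = real p powr (real 2 * (real (n + s) / 2))"
    unfolding r_def using p_gt_1 by (intro powr_power) simp
  also have "real 2 * (real (n + s) / 2) = real (n + s)"
    by simp
  also have "real p powr real (n + s) = real p ^ (n + s)"
    using p_gt_1 by (intro powr_realpow) simp
  finally have r_squared: "r ^ 2 = real p ^ (n + s)" .
  have "plateaued p n s f \<longleftrightarrow> (\<forall>\<mu>. cmod (walsh p n f \<mu>) \<in> {0, r})"
    unfolding plateaued_def r_def ..
  also have "\<dots> \<longleftrightarrow> (\<forall>\<mu>. walsh p n f \<mu> * cnj (walsh p n f \<mu>) * walsh p n f \<mu>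
      = of_real (r ^ 2) * walsh p n f \<mu>)"
    using cmod_in_zero_or_iff[of r] by (simp add: r_def)
  also have "\<dots> \<longleftrightarrow> plat_matrix p f ** conj_transpose (plat_matrix p f) ** plat_matrix p f
      = (of_nat p ^ (n + s)) *\<^sub>R plat_matrix p f"
    unfolding r_squared using assms(4) by (rule plat_matrix_cube_eq_iff[symmetric])
  finally show ?thesis .
qed

end
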